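(* Let $n, a$ be positive integers with $n \equiv 0 \pmod 4$, $a \equiv 0 \pmod 4$, $0 < a < n$, such that $p = \frac{a+n}{4}$ is prime, and let $k$ be a positive integer. Let $\Sigma = \{x \in \{-1,1\}^n : x_1 = 1,\ x_1+\dots+x_n = 0\}$. For $x \in \Sigma$ define $x^{*2k} \in \mathbb{R}^{n^{2k}+n}$ as the vector whose first $n^{2k}$ coordinates are the products $x_{i_1}x_{i_2}\cdots x_{i_{2k}}$, one for each word $(i_1,\dots,i_{2k}) \in \{1,\dots,n\}^{2k}$ (in a fixed order), and whose last $n$ coordinates are $\sqrt{2k a^{2k-1}}\,x_1,\dots,\sqrt{2k a^{2k-1}}\,x_n$. Let $\Omega' = \{x^{*2k} : x \in \Sigma\}$. Then: (i) $(x^{*2k}, y^{*2k}) = (x,y)^{2k} + 2k a^{2k-1}(x,y)$ for all $x,y\in\Sigma$; (ii) $\Omega'$ lies on a sphere centred at the origin of squared radius $n^{2k} + 2k a^{2k-1} n$, and $(\operatorname{diam}\Omega')^2 = 2n^{2k} + 4k a^{2k-1} n + (4k-2)a^{2k}$, with $|x^{*2k}-y^{*2k}| = \operatorname{diam}\Omega'$ if and only if $(x,y) = -a$; (iii) $\Omega'$ is contained in an affine (indeed linear) subspace of dimension at most $n^{2k}$, and $$ f(\Omega') \ge \frac{\binom{n-1}{n/2-1}}{\sum_{i=0}^{p-1}\binom{n}{i}}. $$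
   Context: For a set $\Omega$ in Euclidean space, $\operatorname{diam}\Omega = \sup_{x,y\in\Omega}|x-y|$, and $f(\Omega)$ denotes the minimum number $f$ such that $\Omega = \Omega_1\cup\dots\cup\Omega_f$ with $\operatorname{diam}\Omega_i < \operatorname{diam}\Omega$ for all $i$. $(\cdot,\cdot)$ is the standard inner product. *)

theory Defs
  imports "HOL-Analysis.Analysis"
begin

text \<open>Vectors of R^m are represented as functions nat => real; only the coordinates
  0..m-1 are relevant (coordinate i+1 of the paper is index i here).\<close>

definition ip :: "nat \<Rightarrow> (nat \<Rightarrow> real) \<Rightarrow> (nat \<Rightarrow> real) \<Rightarrow> real" where
  "ip m u v = (\<Sum>i<m. u i * v i)"

definition vdist :: "nat \<Rightarrow> (nat \<Rightarrow> real) \<Rightarrow> (nat \<Rightarrow> real) \<Rightarrow> real" where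
  "vdist m u v = sqrt (\<Sum>i<m. (u i - v i)^2)"

definition vdiam :: "nat \<Rightarrow> (nat \<Rightarrow> real) set \<Rightarrow> real" where
  "vdiam m S = (if S = {} then 0 else Sup {vdist m u v | u v. u \<in> S \<and> v \<in> S})"

definition borsuk_num :: "nat \<Rightarrow> (nat \<Rightarrow> real) set \<Rightarrow> nat" where
  "borsuk_num m S = Inf {f. \<exists>P :: nat \<Rightarrow> (nat \<Rightarrow> real) set.
       S = (\<Union>i<f. P i) \<and> (\<forall>i<f. vdiam m (P i) < vdiam m S)}"

definition Sigma_set :: "nat \<Rightarrow> (nat \<Rightarrow> real) set" where
  "Sigma_set n = {x. (\<forall>i<n. x i = 1 \<or> x i = -1) \<and> (\<forall>i\<ge>n. x i = 0)
                     \<and> x 0 = 1 \<and> (\<Sum>i<n. x i) = 0}"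

text \<open>x^{*2k} in R^(n^(2k)+n): coordinate j < n^(2k) corresponds to the word whose
  t-th letter (t < 2k) is the t-th base-n digit of j.\<close>
definition star :: "nat \<Rightarrow> nat \<Rightarrow> nat \<Rightarrow> (nat \<Rightarrow> real) \<Rightarrow> (nat \<Rightarrow> real)" where
  "star n a k x = (\<lambda>j. if j < n^(2*k) then (\<Prod>t<2*k. x ((j div n^t) mod n))
      else if j < n^(2*k) + n then sqrt (2 * real k * real a ^ (2*k-1)) * x (j - n^(2*k))
      else 0)"

end

theory Submission
  imports Defs "HOL-Library.Function_Algebras"
begin

text \<open>
  Proof strategy.  Write c = 2k a^(2k-1), N = n^(2k) + n and p = (a+n)/4.

  (i) The coordinates of x^{*2k} are indexed by base-n words, so summing products of
  coordinates over all words factorises: (x^{*2k}, y^{*2k}) = (x,y)^{2k} + c (x,y).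
  (ii) Hence |x^{*2k} - y^{*2k}|^2 = 2(n^{2k} + cn) - 2 Q((x,y)) with
  Q(t) = t^{2k} + c t.  By an even Bernoulli inequality Q is uniquely minimised at t = -a,
  and the value -a is attained on Sigma, which gives the diameter and its extremal pairs.
  (iii) Every x^{*2k} is the combination, with its first n^{2k} coordinates as weights,
  of n^{2k} fixed vectors (using x_1 = 1).  For the Borsuk bound, (x,y) = n - 4d(x,y) where
  d(x,y) counts the positions with x_i = 1, y_i = -1, and 0 < d(x,y) < 2p for x \<noteq> y.
  A part of smaller diameter contains no pair with (x,y) = -a, i.e. no pair with p | d(x,y);
  the modular Frankl-Wilson theorem (proved via the polynomials
  prod_{j<p-1} (d(x,y) - j - 1) of degree < p in the signs of y) bounds such a part by
  sum_{i<p} C(n,i), while |Sigma| >= C(n-1, n/2-1).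
\<close>


section \<open>Distances, diameters and the Borsuk number\<close>

lemma vdist_nonneg: "vdist m u v \<ge> 0"
  unfolding vdist_def by (simp add: sum_nonneg)

lemma vdist_sq: "(vdist m u v)^2 = ip m u u + ip m v v - 2 * ip m u v"
proof -
  have "(vdist m u v)^2 = (\<Sum>i<m. (u i - v i)^2)"
    unfolding vdist_def by (simp add: sum_nonneg)
  also have "\<dots> = (\<Sum>i<m. u i * u i + v i * v i - 2 * (u i * v i))"
    by (rule sum.cong) (simp_all add: power2_eq_square algebra_simps)
  also have "\<dots> = ip m u u + ip m v v - 2 * ip m u v"
    unfolding ip_def by (simp add: sum.distrib sum_subtractf sum_distrib_left)
  finally show ?thesis .
qed

lemma vdiam_singleton: "vdiam m {u} = 0"
proof -
  have "{vdist m u' v' | u' v'. u' \<in> {u} \<and> v' \<in> {u}} = {0}" by (auto simp: vdist_def)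
  then show ?thesis unfolding vdiam_def by simp
qed

lemma vdist_le_vdiam:
  assumes "finite P" and "u \<in> P" and "v \<in> P"
  shows "vdist m u v \<le> vdiam m P"
proof -
  have "{vdist m u' v' | u' v'. u' \<in> P \<and> v' \<in> P} = (\<lambda>(u',v'). vdist m u' v') ` (P \<times> P)"
    by auto
  then have "finite {vdist m u' v' | u' v'. u' \<in> P \<and> v' \<in> P}" using assms(1) by simp
  then have "vdist m u v \<le> Sup {vdist m u' v' | u' v'. u' \<in> P \<and> v' \<in> P}"
    using assms(2,3) by (intro cSup_upper bdd_above_finite) auto
  then show ?thesis unfolding vdiam_def using assms(2) by auto
qed

lemma vdiam_eq_attained:
  assumes "u0 \<in> S" and "v0 \<in> S" and "vdist m u0 v0 = d"
    and "\<And>u v. u \<in> S \<Longrightarrow> v \<in> S \<Longrightarrow> vdist m u v \<le> d"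
  shows "vdiam m S = d"
proof -
  have "Sup {vdist m u v | u v. u \<in> S \<and> v \<in> S} = d"
    by (rule cSup_eq_maximum) (use assms in blast)+
  then show ?thesis unfolding vdiam_def using assms(1) by auto
qed

text \<open>For a finite set of positive diameter the infimum defining the Borsuk number is
  attained (singletons give an admissible cover, so the defining set is nonempty).\<close>
lemma borsuk_num_cover:
  assumes fin: "finite S" and pos: "vdiam m S > 0"
  shows "\<exists>P. S = (\<Union>i<borsuk_num m S. P i) \<and> (\<forall>i<borsuk_num m S. vdiam m (P i) < vdiam m S)"
proof -
  let ?FS = "{f. \<exists>P :: nat \<Rightarrow> (nat \<Rightarrow> real) set.
                 S = (\<Union>i<f. P i) \<and> (\<forall>i<f. vdiam m (P i) < vdiam m S)}"
  obtain h where h: "bij_betw h {0..<card S} S" using ex_bij_betw_nat_finite[OF fin] by blast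
  have card: "card S \<in> ?FS"
  proof (intro CollectI exI conjI)
    show "S = (\<Union>i<card S. {h i})" using h unfolding bij_betw_def by (auto simp: atLeast0LessThan)
    show "\<forall>i<card S. vdiam m {h i} < vdiam m S" using pos by (simp add: vdiam_singleton)
  qed
  have "?FS \<noteq> {}" unfolding ex_in_conv[symmetric] using card by (rule exI)
  then have "borsuk_num m S \<in> ?FS" unfolding borsuk_num_def by (rule Inf_nat_def1)
  then show ?thesis by (simp only: mem_Collect_eq)
qed

lemma card_le_borsuk_num_mult:
  fixes g :: "'x \<Rightarrow> nat \<Rightarrow> real"
  assumes fin: "finite X" and pos: "vdiam m (g ` X) > 0"
    and small: "\<And>Y. Y \<subseteq> X \<Longrightarrow> vdiam m (g ` Y) < vdiam m (g ` X) \<Longrightarrow> card Y \<le> B"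
  shows "card X \<le> borsuk_num m (g ` X) * B"
proof -
  define f where "f = borsuk_num m (g ` X)"
  obtain P where cover: "g ` X = (\<Union>i<f. P i)"
    and parts: "\<And>i. i < f \<Longrightarrow> vdiam m (P i) < vdiam m (g ` X)"
    using borsuk_num_cover[OF finite_imageI[OF fin] pos, folded f_def] by blast
  define Y where "Y i = {x \<in> X. g x \<in> P i}" for i
  have cardY: "card (Y i) \<le> B" if "i < f" for i
  proof (rule small)
    have "P i \<subseteq> g ` X" using cover that by auto
    then have "g ` Y i = P i" unfolding Y_def by auto
    then show "vdiam m (g ` Y i) < vdiam m (g ` X)" using parts[OF that] by simp
  qed (simp add: Y_def)
  have "X = (\<Union>i<f. Y i)"
  proof
    show "X \<subseteq> (\<Union>i<f. Y i)"
    proof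
      fix x assume "x \<in> X"
      then obtain i where "i < f" "g x \<in> P i" using cover by (metis UN_E image_eqI lessThan_iff)
      then show "x \<in> (\<Union>i<f. Y i)" using \<open>x \<in> X\<close> unfolding Y_def by blast
    qed
  qed (auto simp: Y_def)
  then have "card X \<le> (\<Sum>i<f. card (Y i))" using card_UN_le[of "{..<f}" Y] by simp
  also have "\<dots> \<le> (\<Sum>i<f. B)" by (rule sum_mono) (simp add: cardY)
  finally show ?thesis unfolding f_def by simp
qed


section \<open>The set Sigma\<close>

definition ones :: "nat \<Rightarrow> (nat \<Rightarrow> real) \<Rightarrow> nat set" where
  "ones n x = {i. i < n \<and> x i = 1}"

definition disagree :: "nat \<Rightarrow> (nat \<Rightarrow> real) \<Rightarrow> (nat \<Rightarrow> real) \<Rightarrow> nat" where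
  "disagree n x y = card (ones n x - ones n y)"

lemma finite_ones [simp]: "finite (ones n x)"
  unfolding ones_def by simp

lemma disagree_self [simp]: "disagree n x x = 0"
  unfolding disagree_def by simp

lemma Sigma_n_pos: "x \<in> Sigma_set n \<Longrightarrow> n > 0"
  by (cases n) (auto simp: Sigma_set_def)

lemma finite_Sigma: "finite (Sigma_set n)"
proof -
  have "Sigma_set n \<subseteq> {f. \<forall>x. (x \<in> {..<n} \<longrightarrow> f x \<in> {1,-1}) \<and> (x \<notin> {..<n} \<longrightarrow> f x = 0)}"
    unfolding Sigma_set_def by auto
  then show ?thesis
    using finite_set_of_finite_funs[of "{..<n}" "{1,-1::real}" 0] finite_subset by blast
qed

lemma ip_self: "x \<in> Sigma_set n \<Longrightarrow> ip n x x = n"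
proof -
  assume x: "x \<in> Sigma_set n"
  have "(\<Sum>i<n. x i * x i) = (\<Sum>i<n. 1)"
    by (rule sum.cong) (use x in \<open>auto simp: Sigma_set_def\<close>)
  then show ?thesis unfolding ip_def by simp
qed

lemma card_ones_Sigma:
  assumes x: "x \<in> Sigma_set n"
  shows "2 * card (ones n x) = n"
proof -
  have "(\<Sum>i<n. x i) = (\<Sum>i<n. (if x i = 1 then 2 else 0) - 1)"
    by (rule sum.cong) (use x in \<open>auto simp: Sigma_set_def\<close>)
  also have "\<dots> = (\<Sum>i<n. (if x i = 1 then 2 else 0)) - real n"
    by (simp add: sum_subtractf)
  also have "(\<Sum>i<n. (if x i = 1 then 2 else 0)) = (2::real) * real (card (ones n x))"
  proof -
    have "{..<n} \<inter> {i. x i = 1} = ones n x" by (auto simp: ones_def)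
    then show ?thesis by (simp add: sum.If_cases)
  qed
  finally have "0 = 2 * real (card (ones n x)) - real n" using x by (simp add: Sigma_set_def)
  then show ?thesis by linarith
qed

lemma disagree_sym:
  assumes x: "x \<in> Sigma_set n" and y: "y \<in> Sigma_set n"
  shows "disagree n y x = disagree n x y"
proof -
  have "card (ones n x) = card (ones n y)"
    using card_ones_Sigma[OF x] card_ones_Sigma[OF y] by simp
  moreover have "card (ones n x) = card (ones n x \<inter> ones n y) + card (ones n x - ones n y)"
    by (simp add: card_Int_Diff)
  moreover have "card (ones n y) = card (ones n y \<inter> ones n x) + card (ones n y - ones n x)"
    by (simp add: card_Int_Diff)
  ultimately show ?thesis unfolding disagree_def by (simp add: Int_commute)
qed

lemma ip_disagree:
  assumes x: "x \<in> Sigma_set n" and y: "y \<in> Sigma_set n"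
  shows "ip n x y = real n - 4 * real (disagree n x y)"
proof -
  let ?A = "ones n x - ones n y" and ?B = "ones n y - ones n x"
  have "(\<Sum>i<n. x i * y i) = (\<Sum>i<n. 1 - (if i \<in> ?A then 2 else 0) - (if i \<in> ?B then 2 else 0))"
  proof (rule sum.cong)
    fix i assume "i \<in> {..<n}"
    then have "x i = 1 \<or> x i = -1" "y i = 1 \<or> y i = -1" "i < n"
      using x y by (auto simp: Sigma_set_def)
    then show "x i * y i = 1 - (if i \<in> ?A then 2 else 0) - (if i \<in> ?B then 2 else 0)"
      by (auto simp: ones_def)
  qed simp
  also have "\<dots> = real n - 2 * real (card ?A) - 2 * real (card ?B)"
  proof -
    have "{..<n} \<inter> ?A = ?A" "{..<n} \<inter> ?B = ?B"
      "{..<n} \<inter> {i \<in> ones n x. i \<notin> ones n y} = ?A" "{..<n} \<inter> {i \<in> ones n y. i \<notin> ones n x} = ?B"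
      by (auto simp: ones_def)
    then show ?thesis by (simp add: sum_subtractf sum.If_cases)
  qed
  finally show ?thesis
    unfolding ip_def using disagree_sym[OF x y] by (simp add: disagree_def)
qed

lemma disagree_eq_0:
  assumes x: "x \<in> Sigma_set n" and y: "y \<in> Sigma_set n" and d: "disagree n x y = 0"
  shows "x = y"
proof
  fix i
  have "disagree n y x = 0" using d disagree_sym[OF x y] by simp
  then have "ones n x = ones n y" using d unfolding disagree_def
    by (metis Diff_eq_empty_iff card_0_eq finite_Diff finite_ones subset_antisym)
  then have "i < n \<Longrightarrow> x i = 1 \<longleftrightarrow> y i = 1" unfolding ones_def by blast
  then show "x i = y i" using x y unfolding Sigma_set_def by (cases "i < n") force+
qed

text \<open>Both vectors have x_1 = y_1 = 1, so d(x,y) < n/2.\<close>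
lemma disagree_bound:
  assumes x: "x \<in> Sigma_set n" and y: "y \<in> Sigma_set n"
  shows "disagree n x y + 1 \<le> n div 2"
proof -
  have n: "n > 0" using Sigma_n_pos[OF x] .
  have 0: "0 \<in> ones n x" "0 \<in> ones n y" using x y n by (simp_all add: ones_def Sigma_set_def)
  then have "card (ones n x - ones n y) \<le> card (ones n x - {0})" by (intro card_mono) auto
  also have "\<dots> = card (ones n x) - 1" using 0 by simp
  finally show ?thesis unfolding disagree_def using card_ones_Sigma[OF x] 0 card_gt_0_iff
    by (metis finite_ones empty_iff One_nat_def Suc_leI le_add_diff_inverse2 add_le_mono1
        nonzero_mult_div_cancel_left zero_neq_numeral)
qed

definition vec_of_set :: "nat \<Rightarrow> nat set \<Rightarrow> nat \<Rightarrow> real" where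
  "vec_of_set n S = (\<lambda>i. if i < n then (if i \<in> S then 1 else -1) else 0)"

lemma ones_vec_of_set: "S \<subseteq> {..<n} \<Longrightarrow> ones n (vec_of_set n S) = S"
  unfolding ones_def vec_of_set_def by auto

lemma vec_of_set_in_Sigma:
  assumes S: "S \<subseteq> {..<n}" and z: "0 \<in> S" and c: "2 * card S = n"
  shows "vec_of_set n S \<in> Sigma_set n"
proof -
  have "(\<Sum>i<n. vec_of_set n S i) = (\<Sum>i<n. (if i \<in> S then 2 else 0) - 1)"
    by (rule sum.cong) (auto simp: vec_of_set_def)
  also have "\<dots> = (\<Sum>i<n. (if i \<in> S then 2 else 0)) - real n" by (simp add: sum_subtractf)
  also have "(\<Sum>i<n. (if i \<in> S then 2 else 0)) = (2::real) * real (card S)"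
  proof -
    have "{..<n} \<inter> S = S" using S by auto
    then show ?thesis by (simp add: sum.If_cases)
  qed
  finally have "(\<Sum>i<n. vec_of_set n S i) = 0" using c by simp
  moreover have "n > 0" using S z by auto
  ultimately show ?thesis using z unfolding Sigma_set_def by (auto simp: vec_of_set_def)
qed

text \<open>Choosing the n/2-1 further +1 positions among 1..n-1 freely shows
  |Sigma| >= C(n-1, n/2-1).\<close>
lemma card_Sigma_ge:
  assumes n: "even n" "n > 0"
  shows "(n - 1) choose (n div 2 - 1) \<le> card (Sigma_set n)"
proof -
  let ?T = "{S. S \<subseteq> {1..<n} \<and> card S = n div 2 - 1}"
  let ?g = "\<lambda>S. vec_of_set n (insert 0 S)"
  have cT: "card ?T = (n - 1) choose (n div 2 - 1)" using n_subsets[of "{1..<n}"] by simp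
  have img: "?g ` ?T \<subseteq> Sigma_set n"
  proof
    fix v assume "v \<in> ?g ` ?T"
    then obtain S where S: "S \<subseteq> {1..<n}" "card S = n div 2 - 1" and v: "v = ?g S" by auto
    have "finite S" "0 \<notin> S" using S finite_subset by auto
    then have "card (insert 0 S) = n div 2" using S n by auto
    then show "v \<in> Sigma_set n" unfolding v using S n by (intro vec_of_set_in_Sigma) auto
  qed
  have "inj_on ?g ?T"
  proof
    fix S1 S2 assume S1: "S1 \<in> ?T" and S2: "S2 \<in> ?T" and e: "?g S1 = ?g S2"
    have "insert 0 S1 \<subseteq> {..<n}" "insert 0 S2 \<subseteq> {..<n}" using S1 S2 n by auto
    then have "insert 0 S1 = insert 0 S2"
      using arg_cong[OF e, of "ones n"] by (simp add: ones_vec_of_set)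
    moreover have "0 \<notin> S1" "0 \<notin> S2" using S1 S2 by auto
    ultimately show "S1 = S2" by (metis Diff_insert_absorb)
  qed
  then show ?thesis using card_inj_on_le[OF _ img finite_Sigma] cT by simp
qed

text \<open>The inner product -a is attained on Sigma: with n = 4q and a = 4r take +1 on
  [0,2q) for x and on [0,q-r) \<union> [3q-r,4q) for y, so d(x,y) = q + r.\<close>
lemma Sigma_pair_ip:
  assumes "n mod 4 = 0" "a mod 4 = 0" "0 < a" "a < n"
  obtains x y where "x \<in> Sigma_set n" "y \<in> Sigma_set n" "ip n x y = - real a"
proof -
  define q where "q = n div 4"
  define r where "r = a div 4"
  have nq: "n = 4*q" and ar: "a = 4*r" using assms unfolding q_def r_def by auto
  have rq: "0 < r" "r < q" using assms nq ar by auto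
  define A where "A = {..<2*q}"
  define B where "B = {..<q-r} \<union> {3*q-r..<4*q}"
  have A: "A \<subseteq> {..<n}" "0 \<in> A" "2 * card A = n" using nq rq by (auto simp: A_def)
  have "card B = (q - r) + (4*q - (3*q - r))"
    unfolding B_def by (subst card_Un_disjoint) auto
  then have B: "B \<subseteq> {..<n}" "0 \<in> B" "2 * card B = n" using nq rq by (auto simp: B_def)
  have AB: "A - B = {q-r..<2*q}" using rq by (auto simp: A_def B_def)
  let ?x = "vec_of_set n A" and ?y = "vec_of_set n B"
  have x: "?x \<in> Sigma_set n" and y: "?y \<in> Sigma_set n" using vec_of_set_in_Sigma A B by auto
  have "disagree n ?x ?y = q + r"
    unfolding disagree_def ones_vec_of_set[OF A(1)] ones_vec_of_set[OF B(1)] AB using rq by simp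
  then have "ip n ?x ?y = - real a" unfolding ip_disagree[OF x y] using nq ar by simp
  with x y that show ?thesis by blast
qed


section \<open>The modular Frankl-Wilson bound\<close>

global_interpretation rat_fun: vector_space "\<lambda>(c::rat) (f::'b \<Rightarrow> rat) y. c * f y"
  by unfold_locales (auto simp: fun_eq_iff algebra_simps)

lemma fun_sum_apply: "(\<Sum>i\<in>A. f i) y = (\<Sum>i\<in>A. f i y)"
  by (induction A rule: infinite_finite_induct) auto

lemma left_kernel_mod_p_dvd:
  fixes M :: "'x \<Rightarrow> 'x \<Rightarrow> int" and p :: int
  assumes pr: "prime p" and fin: "finite G" and diag: "\<forall>x\<in>G. \<not> p dvd M x x"
    and off: "\<forall>x\<in>G. \<forall>y\<in>G. x \<noteq> y \<longrightarrow> p dvd M x y"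
    and ker: "\<forall>y\<in>G. (\<Sum>x\<in>G. c x * M x y) = 0" and y: "y \<in> G"
  shows "p dvd c y"
proof -
  have "(\<Sum>x\<in>G. c x * M x y) = c y * M y y + (\<Sum>x\<in>G-{y}. c x * M x y)"
    using fin y by (simp add: sum.remove)
  moreover have "p dvd (\<Sum>x\<in>G-{y}. c x * M x y)"
    using off y by (intro dvd_sum) auto
  ultimately have "p dvd c y * M y y" using ker y
    by (metis add.commute add_cancel_right_left dvd_add_right_iff dvd_0_right)
  then show ?thesis using diag y pr prime_dvd_mult_iff by blast
qed

text \<open>Such a matrix is nonsingular: by infinite descent, dividing a kernel vector by p
  again and again.\<close>
lemma left_kernel_mod_p_trivial:
  fixes M :: "'x \<Rightarrow> 'x \<Rightarrow> int" and p :: int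
  assumes pr: "prime p" and fin: "finite G" and diag: "\<forall>x\<in>G. \<not> p dvd M x x"
    and off: "\<forall>x\<in>G. \<forall>y\<in>G. x \<noteq> y \<longrightarrow> p dvd M x y"
  shows "\<forall>y\<in>G. (\<Sum>x\<in>G. c x * M x y) = 0 \<Longrightarrow> \<forall>x\<in>G. c x = 0"
proof (induction "\<Sum>x\<in>G. nat \<bar>c x\<bar>" arbitrary: c rule: less_induct)
  case less
  show ?case
  proof (rule ccontr)
    assume "\<not> (\<forall>x\<in>G. c x = 0)"
    then obtain x0 where x0: "x0 \<in> G" "c x0 \<noteq> 0" by auto
    define c' where "c' x = c x div p" for x
    have cc: "c x = p * c' x" if "x \<in> G" for x
      using left_kernel_mod_p_dvd[OF assms less.prems that] by (simp add: c'_def)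
    have p2: "\<bar>p\<bar> \<ge> 2" using prime_ge_2_int[OF pr] by simp
    have ker': "\<forall>y\<in>G. (\<Sum>x\<in>G. c' x * M x y) = 0"
    proof
      fix y assume "y \<in> G"
      moreover have "p * (\<Sum>x\<in>G. c' x * M x y) = (\<Sum>x\<in>G. c x * M x y)"
        by (simp add: sum_distrib_left cc mult.assoc)
      ultimately show "(\<Sum>x\<in>G. c' x * M x y) = 0" using less.prems p2 by auto
    qed
    have shrink: "nat \<bar>c' x\<bar> \<le> nat \<bar>c x\<bar>" and strict: "c' x \<noteq> 0 \<Longrightarrow> nat \<bar>c' x\<bar> < nat \<bar>c x\<bar>"
      if "x \<in> G" for x
    proof -
      have e: "\<bar>c x\<bar> = \<bar>c' x\<bar> * \<bar>p\<bar>" using that by (simp add: cc abs_mult)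
      have "\<bar>c' x\<bar> * 1 \<le> \<bar>c' x\<bar> * \<bar>p\<bar>" by (rule mult_left_mono) (use p2 in auto)
      then show "nat \<bar>c' x\<bar> \<le> nat \<bar>c x\<bar>" unfolding e by simp
      assume "c' x \<noteq> 0"
      then have "\<bar>c' x\<bar> * 1 < \<bar>c' x\<bar> * \<bar>p\<bar>" by (intro mult_strict_left_mono) (use p2 in auto)
      then show "nat \<bar>c' x\<bar> < nat \<bar>c x\<bar>" unfolding e by simp
    qed
    have "c' x0 \<noteq> 0" using cc[OF x0(1)] x0 by auto
    then have "(\<Sum>x\<in>G. nat \<bar>c' x\<bar>) < (\<Sum>x\<in>G. nat \<bar>c x\<bar>)"
      using shrink strict x0(1) by (intro sum_strict_mono_ex1[OF fin]) auto
    from less.hyps[OF this ker'] have "c' x0 = 0" using x0 by auto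
    then show False using cc[OF x0(1)] x0 by simp
  qed
qed

lemma rat_common_denominator:
  fixes u :: "'x \<Rightarrow> rat"
  shows "finite A \<Longrightarrow> \<exists>D::int. D > 0 \<and> (\<forall>a\<in>A. \<exists>z::int. of_int D * u a = of_int z)"
proof (induction A rule: finite_induct)
  case empty
  then show ?case by (intro exI[of _ 1]) auto
next
  case (insert a A)
  then obtain D where D: "D > 0" "\<forall>b\<in>A. \<exists>z::int. of_int D * u b = of_int z" by auto
  obtain nu de where q: "quotient_of (u a) = (nu, de)" by (cases "quotient_of (u a)")
  have de: "de > 0" using quotient_of_denom_pos[OF q] .
  have ua: "u a = of_int nu / of_int de" using quotient_of_div[OF q] .
  have "\<exists>z. of_int (D * de) * u b = of_int z" if "b \<in> insert a A" for b
    using that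
  proof
    assume "b = a"
    then show ?thesis using de by (intro exI[of _ "D * nu"]) (simp add: ua)
  next
    assume "b \<in> A"
    then obtain z where "of_int D * u b = of_int z" using D by auto
    then show ?thesis by (intro exI[of _ "de * z"]) (simp add: algebra_simps)
  qed
  moreover have "D * de > 0" using D de by simp
  ultimately show ?case by blast
qed

lemma rows_mod_p_diagonal_independent:
  fixes M :: "'x \<Rightarrow> 'x \<Rightarrow> int" and p :: int
  assumes pr: "prime p" and diag: "\<forall>x\<in>F. \<not> p dvd M x x"
    and off: "\<forall>x\<in>F. \<forall>y\<in>F. x \<noteq> y \<longrightarrow> p dvd M x y"
  shows "inj_on (\<lambda>x y. rat_of_int (M x y)) F"
    and "\<not> rat_fun.dependent ((\<lambda>x y. rat_of_int (M x y)) ` F)"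
proof -
  let ?v = "\<lambda>x y. rat_of_int (M x y)"
  show inj: "inj_on ?v F"
  proof
    fix x y assume "x \<in> F" "y \<in> F" "?v x = ?v y"
    then have "M x x = M y x" by (metis of_int_eq_iff)
    then show "x = y" using diag off \<open>x \<in> F\<close> \<open>y \<in> F\<close> by metis
  qed
  show "\<not> rat_fun.dependent (?v ` F)"
  proof
    assume "rat_fun.dependent (?v ` F)"
    then obtain t u where t: "finite t" "t \<subseteq> ?v ` F" "(\<Sum>w\<in>t. (\<lambda>y. u w * w y)) = 0"
      and nz: "\<exists>w\<in>t. u w \<noteq> 0"
      unfolding rat_fun.dependent_explicit by blast
    define G where "G = {x\<in>F. ?v x \<in> t}"
    have tG: "t = ?v ` G" using t(2) unfolding G_def by auto
    have injG: "inj_on ?v G" using inj by (rule inj_on_subset) (auto simp: G_def)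
    have finG: "finite G" using finite_imageD[OF _ injG] t(1) tG by simp
    have sum0: "(\<Sum>x\<in>G. u (?v x) * ?v x y) = 0" for y
      using fun_cong[OF t(3), of y] unfolding tG by (simp add: fun_sum_apply sum.reindex[OF injG])
    obtain D where D: "D > 0" "\<forall>x\<in>G. \<exists>z::int. of_int D * u (?v x) = of_int z"
      using rat_common_denominator[OF finG, of "\<lambda>x. u (?v x)"] by auto
    then obtain z where z: "\<forall>x\<in>G. of_int D * u (?v x) = of_int (z x)" by metis
    have ker: "\<forall>y\<in>G. (\<Sum>x\<in>G. z x * M x y) = 0"
    proof
      fix y
      have "rat_of_int (\<Sum>x\<in>G. z x * M x y) = (\<Sum>x\<in>G. of_int D * u (?v x) * ?v x y)"
        using z by (simp add: of_int_sum)
      also have "\<dots> = of_int D * (\<Sum>x\<in>G. u (?v x) * ?v x y)"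
        by (simp add: sum_distrib_left mult.assoc)
      also have "\<dots> = 0" using sum0 by simp
      finally show "(\<Sum>x\<in>G. z x * M x y) = 0" by (simp only: of_int_eq_0_iff)
    qed
    have "\<forall>x\<in>G. z x = 0"
      by (rule left_kernel_mod_p_trivial[OF pr finG _ _ ker]) (use diag off in \<open>auto simp: G_def\<close>)
    then have "\<forall>x\<in>G. u (?v x) = 0" using z D by auto
    then show False using nz tG by auto
  qed
qed

text \<open>The space of functions of y that are polynomials of degree at most d in the signs
  of y_0, ..., y_(n-1), spanned by the square-free sign monomials.\<close>
definition sg :: "real \<Rightarrow> rat" where
  "sg r = (if r = 1 then 1 else -1)"

definition sign_monomial :: "nat set \<Rightarrow> (nat \<Rightarrow> real) \<Rightarrow> rat" where
  "sign_monomial S y = (\<Prod>i\<in>S. sg (y i))"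

definition low_degree :: "nat \<Rightarrow> nat \<Rightarrow> ((nat \<Rightarrow> real) \<Rightarrow> rat) set" where
  "low_degree n d = rat_fun.span (sign_monomial ` {S. S \<subseteq> {..<n} \<and> card S \<le> d})"

lemma sign_monomial_low_degree:
  "S \<subseteq> {..<n} \<Longrightarrow> card S \<le> d \<Longrightarrow> sign_monomial S \<in> low_degree n d"
  unfolding low_degree_def by (rule rat_fun.span_base) auto

text \<open>Multiplying a monomial by one more sign raises the degree by at most one
  (as sg^2 = 1 the result is again a square-free monomial).\<close>
lemma sign_monomial_times_sg:
  assumes S: "S \<subseteq> {..<n}" "card S \<le> d" and i: "i < n"
  shows "(\<lambda>y. sign_monomial S y * sg (y i)) \<in> low_degree n (Suc d)"
proof -
  have fin: "finite S" using S(1) finite_subset by blast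
  show ?thesis
  proof (cases "i \<in> S")
    case True
    have "sign_monomial S y * sg (y i) = sign_monomial (S - {i}) y" for y
      using prod.remove[OF fin True, of "\<lambda>i. sg (y i)"] by (simp add: sign_monomial_def sg_def)
    moreover have "card (S - {i}) \<le> Suc d" using S card_Diff1_le[of S i] by linarith
    ultimately show ?thesis using S by (simp add: sign_monomial_low_degree subset_eq)
  next
    case False
    have "sign_monomial S y * sg (y i) = sign_monomial (insert i S) y" for y
      unfolding sign_monomial_def using False fin by (simp add: mult.commute)
    moreover have "card (insert i S) \<le> Suc d" using S fin False by simp
    ultimately show ?thesis using S i by (simp add: sign_monomial_low_degree)
  qed
qed

lemma disagree_sign_sum:
  "rat_of_nat (disagree n x y) = (\<Sum>i\<in>ones n x. (1 - sg (y i)) / 2)"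
proof -
  have "(\<Sum>i\<in>ones n x. (1 - sg (y i)) / (2::rat)) = (\<Sum>i\<in>ones n x. if y i \<noteq> 1 then 1 else 0)"
    by (rule sum.cong) (auto simp: sg_def)
  also have "\<dots> = of_nat (card (ones n x - ones n y))"
  proof -
    have "ones n x \<inter> {i. y i \<noteq> 1} = ones n x - ones n y" by (auto simp: ones_def)
    then show ?thesis by (simp add: sum.If_cases)
  qed
  finally show ?thesis unfolding disagree_def by simp
qed

lemma low_degree_times_disagree:
  assumes "g \<in> low_degree n d"
  shows "(\<lambda>y. g y * (of_nat (disagree n x y) - c)) \<in> low_degree n (Suc d)"
proof -
  let ?A = "ones n x"
  have base: "(\<lambda>y. sign_monomial S y * (of_nat (disagree n x y) - c)) \<in> low_degree n (Suc d)"
    if S: "S \<subseteq> {..<n}" "card S \<le> d" for S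
  proof -
    have eq: "(\<lambda>y. sign_monomial S y * (of_nat (disagree n x y) - c))
       = (\<Sum>i\<in>?A. (\<lambda>y. (1/2) * sign_monomial S y) + (\<lambda>y. (-1/2) * (sign_monomial S y * sg (y i))))
          + (\<lambda>y. (-c) * sign_monomial S y)"
      by (auto simp: fun_eq_iff fun_sum_apply disagree_sign_sum sum_distrib_left
          sum.distrib[symmetric] algebra_simps diff_divide_distrib)
    have "i \<in> ?A \<Longrightarrow> i < n" for i by (simp add: ones_def)
    then show ?thesis unfolding eq low_degree_def
      using sign_monomial_low_degree[of S n "Suc d"] sign_monomial_times_sg[OF S] S
      by (intro rat_fun.span_add rat_fun.span_sum rat_fun.span_scale) (auto simp: low_degree_def)
  qed
  show ?thesis using assms unfolding low_degree_def
  proof (induction rule: rat_fun.span_induct_alt)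
    case base
    then show ?case by (simp add: rat_fun.span_zero[unfolded zero_fun_def])
  next
    case (step a f h)
    then obtain S where S: "S \<subseteq> {..<n}" "card S \<le> d" "f = sign_monomial S" by auto
    have "(\<lambda>y. ((\<lambda>y. a * f y) + h) y * (of_nat (disagree n x y) - c))
       = (\<lambda>y. a * (sign_monomial S y * (of_nat (disagree n x y) - c)))
         + (\<lambda>y. h y * (of_nat (disagree n x y) - c))"
      using S by (auto simp: fun_eq_iff algebra_simps)
    then show ?case
      using base[OF S(1,2)] step by (auto simp: low_degree_def intro: rat_fun.span_add rat_fun.span_scale)
  qed
qed

text \<open>The Frankl-Wilson matrix entries: the row of x, as a function of y, vanishes modulo
  p exactly when d(x,y) is not divisible by p.\<close>
definition fw_entry :: "nat \<Rightarrow> nat \<Rightarrow> (nat \<Rightarrow> real) \<Rightarrow> (nat \<Rightarrow> real) \<Rightarrow> int" where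
  "fw_entry p n x y = (\<Prod>j<p-1. int (disagree n x y) - int (j+1))"

lemma fw_entry_low_degree:
  "(\<lambda>y. rat_of_int (fw_entry p n x y)) \<in> low_degree n (p - 1)"
proof -
  have "(\<lambda>y. \<Prod>j<q. (of_nat (disagree n x y) - of_nat (j+1) :: rat)) \<in> low_degree n q" for q
  proof (induction q)
    case 0
    have "sign_monomial {} \<in> low_degree n 0" by (rule sign_monomial_low_degree) auto
    moreover have "sign_monomial {} = (\<lambda>y. 1)" by (simp add: fun_eq_iff sign_monomial_def)
    ultimately show ?case by simp
  next
    case (Suc q)
    from low_degree_times_disagree[OF Suc, of x "of_nat (Suc q)"] show ?case by simp
  qed
  then show ?thesis by (simp add: fw_entry_def of_int_prod)
qed

lemma fw_entry_diag:
  assumes "prime p"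
  shows "\<not> int p dvd fw_entry p n x x"
proof
  assume "int p dvd fw_entry p n x x"
  then have "\<exists>j\<in>{..<p-1}. int p dvd int (disagree n x x) - int (j+1)"
    using assms by (simp add: fw_entry_def prime_dvd_prod_iff)
  then obtain j where j: "j < p - 1" "int p dvd - int (j+1)" by auto
  then have "int p dvd int (j+1)" by (simp only: dvd_minus_iff)
  then have "int p \<le> int (j+1)" by (rule zdvd_imp_le) simp
  with j show False by linarith
qed

lemma fw_entry_off:
  assumes "prime p" and "\<not> p dvd disagree n x y"
  shows "int p dvd fw_entry p n x y"
proof -
  let ?m = "disagree n x y"
  define j where "j = ?m mod p - 1"
  have p0: "p > 0" using assms(1) prime_gt_0_nat by blast
  have "?m mod p \<noteq> 0" using assms(2) mod_0_imp_dvd by blast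
  moreover have "?m mod p < p" using p0 by simp
  ultimately have j: "j < p - 1" "j + 1 = ?m mod p" unfolding j_def by arith+
  then have "?m = p * (?m div p) + (j+1)" by simp
  then have "int ?m - int (j+1) = int p * int (?m div p)" by (metis add_diff_cancel_right' of_nat_add of_nat_mult)
  then have "int p dvd int ?m - int (j+1)" by simp
  also have "\<dots> dvd fw_entry p n x y" unfolding fw_entry_def using j(1) by (intro dvd_prodI) auto
  finally show ?thesis .
qed

lemma card_small_subsets:
  assumes "p > 0"
  shows "card {S. S \<subseteq> {..<n} \<and> card S \<le> p - 1} = (\<Sum>i<p. n choose i)"
proof -
  have e: "{S. S \<subseteq> {..<n} \<and> card S \<le> p - 1} = (\<Union>i<p. {S. S \<subseteq> {..<n} \<and> card S = i})"
    using assms by auto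
  have "card (\<Union>i<p. {S. S \<subseteq> {..<n} \<and> card S = i}) = (\<Sum>i<p. card {S. S \<subseteq> {..<n} \<and> card S = i})"
    by (rule card_UN_disjoint) (auto intro: finite_subset[of _ "Pow {..<n}"])
  then show ?thesis using e by (simp add: n_subsets)
qed

text \<open>The rows of the
  Frankl-Wilson matrix are independent and lie in the space of degree < p.\<close>
theorem frankl_wilson_modular:
  fixes F :: "(nat \<Rightarrow> real) set"
  assumes pr: "prime p" and nz: "\<forall>x\<in>F. \<forall>y\<in>F. x \<noteq> y \<longrightarrow> \<not> p dvd disagree n x y"
  shows "card F \<le> (\<Sum>i<p. n choose i)"
proof -
  let ?v = "\<lambda>x y. rat_of_int (fw_entry p n x y)"
  let ?Mons = "{S. S \<subseteq> {..<n} \<and> card S \<le> p - 1}"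
  have "prime (int p)" using pr by simp
  note rows = rows_mod_p_diagonal_independent[OF this, of F "fw_entry p n"]
  have inj: "inj_on ?v F" and indep: "\<not> rat_fun.dependent (?v ` F)"
    using rows fw_entry_diag[OF pr] fw_entry_off[OF pr] nz by auto
  have finMons: "finite ?Mons" by (rule finite_subset[of _ "Pow {..<n}"]) auto
  have "?v ` F \<subseteq> rat_fun.span (sign_monomial ` ?Mons)"
    using fw_entry_low_degree unfolding low_degree_def by auto
  then have "card (?v ` F) \<le> card (sign_monomial ` ?Mons)"
    using rat_fun.independent_span_bound[OF finite_imageI[OF finMons] indep] by auto
  also have "\<dots> \<le> card ?Mons" by (rule card_image_le[OF finMons])
  finally show ?thesis
    using card_image[OF inj] card_small_subsets[of p n] pr prime_gt_0_nat by simp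
qed


section \<open>The embedding x \<mapsto> x^{*2k}\<close>

lemma sum_lessThan_add: "(\<Sum>j<m + (n::nat). f j) = (\<Sum>j<m. f j) + (\<Sum>i<n. f (m + i))"
  by (induction n) (simp_all add: add.assoc)

lemma words_sum:
  fixes g :: "nat \<Rightarrow> 'a::comm_semiring_1"
  shows "(\<Sum>j<n^m. \<Prod>t<m. g ((j div n^t) mod n)) = (\<Sum>i<n. g i)^m"
proof (induction m)
  case 0
  then show ?case by simp
next
  case (Suc m)
  let ?P = "\<lambda>q. \<Prod>t<m. g ((q div n^t) mod n)"
  have inner: "(\<Sum>j\<in>{q*n..<q*n+n}. \<Prod>t<Suc m. g ((j div n^t) mod n)) = ?P q * (\<Sum>i<n. g i)" for q
  proof -
    have "(\<Sum>j\<in>{q*n..<q*n+n}. \<Prod>t<Suc m. g ((j div n^t) mod n))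
        = (\<Sum>r<n. \<Prod>t<Suc m. g (((r + q*n) div n^t) mod n))"
      using sum.shift_bounds_nat_ivl[of _ 0 "q*n" n] by (simp add: atLeast0LessThan add.commute)
    also have "\<dots> = (\<Sum>r<n. g r * ?P q)"
    proof (rule sum.cong)
      fix r assume "r \<in> {..<n}"
      then have "(r + q*n) div n = q" "(r + q*n) mod n = r" by auto
      then show "(\<Prod>t<Suc m. g (((r + q*n) div n^t) mod n)) = g r * ?P q"
        by (simp add: prod.lessThan_Suc_shift div_mult2_eq del: prod.lessThan_Suc)
    qed simp
    finally show ?thesis by (simp add: sum_distrib_right mult.commute)
  qed
  have "(\<Sum>j<n^Suc m. \<Prod>t<Suc m. g ((j div n^t) mod n))
      = (\<Sum>q<n^m. \<Sum>j\<in>{q*n..<q*n+n}. \<Prod>t<Suc m. g ((j div n^t) mod n))"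
    by (simp only: sum.nat_group power_Suc2)
  also have "\<dots> = (\<Sum>q<n^m. ?P q * (\<Sum>i<n. g i))"
    by (intro sum.cong refl inner)
  also have "\<dots> = (\<Sum>q<n^m. ?P q) * (\<Sum>i<n. g i)"
    by (rule sum_distrib_right[symmetric])
  finally show ?case by (simp only: Suc.IH power_Suc2)
qed

definition gram_kernel :: "nat \<Rightarrow> nat \<Rightarrow> real \<Rightarrow> real" where
  "gram_kernel k a t = t^(2*k) + 2 * real k * real a^(2*k-1) * t"

lemma star_ip:
  "ip (n^(2*k)+n) (star n a k x) (star n a k y) = gram_kernel k a (ip n x y)"
proof -
  let ?c = "2 * real k * real a^(2*k-1)"
  let ?M = "n^(2*k)"
  have "ip (?M+n) (star n a k x) (star n a k y)
      = (\<Sum>j<?M. star n a k x j * star n a k y j) + (\<Sum>i<n. star n a k x (?M+i) * star n a k y (?M+i))"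
    unfolding ip_def by (rule sum_lessThan_add)
  also have "(\<Sum>j<?M. star n a k x j * star n a k y j)
      = (\<Sum>j<?M. \<Prod>t<2*k. (\<lambda>i. x i * y i) ((j div n^t) mod n))"
    by (rule sum.cong) (simp_all add: star_def prod.distrib)
  also have "\<dots> = (ip n x y)^(2*k)" unfolding ip_def by (rule words_sum)
  also have "(\<Sum>i<n. star n a k x (?M+i) * star n a k y (?M+i)) = (\<Sum>i<n. ?c * (x i * y i))"
    by (rule sum.cong) (simp_all add: star_def algebra_simps)
  also have "\<dots> = ?c * ip n x y" unfolding ip_def by (simp add: sum_distrib_left)
  finally show ?thesis unfolding gram_kernel_def .
qed

text \<open>Since x_1 = 1, the coordinate of the word i 1 1 ... 1 (that is, j = i < n) is x_i.\<close>
lemma star_low: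
  assumes x0: "x 0 = 1" and k: "k > 0" and i: "i < n"
  shows "star n a k x i = x i"
proof -
  have n: "n > 0" using i by simp
  have "n \<le> n^(2*k)" using n k by (simp add: self_le_power)
  have "(\<Prod>t<2*k. x ((i div n^t) mod n)) = (\<Prod>t<Suc (2*k-1). x ((i div n^t) mod n))"
    using k by simp
  also have "\<dots> = x (i mod n) * (\<Prod>t<2*k-1. x ((i div n^(Suc t)) mod n))"
    by (subst prod.lessThan_Suc_shift) simp
  also have "\<dots> = x i"
  proof -
    have "i div n^(Suc t) = 0" for t
    proof -
      have "n \<le> n^(Suc t)" using n by (intro self_le_power) auto
      then have "i < n^(Suc t)" using i by linarith
      then show ?thesis by (rule div_less)
    qed
    then show ?thesis using i x0 by simp
  qed
  finally show ?thesis using i \<open>n \<le> n^(2*k)\<close> unfolding star_def by simp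
qed

lemma star_high:
  "i < n \<Longrightarrow> star n a k x (n^(2*k) + i) = sqrt (2 * real k * real a ^ (2*k-1)) * x i"
  unfolding star_def by simp

lemma star_sq_norm:
  "x \<in> Sigma_set n \<Longrightarrow> ip (n^(2*k)+n) (star n a k x) (star n a k x)
     = real n^(2*k) + 2 * real k * real a^(2*k-1) * real n"
  by (simp add: star_ip ip_self gram_kernel_def)

lemma bernoulli_even_strict:
  assumes k: "k > 0" and s: "(s::real) \<noteq> 1"
  shows "1 + real (2*k) * (s - 1) < s^(2*k)"
proof -
  have "1 + real k * (s^2 - 1) \<le> (1 + (s^2 - 1))^k"
    by (rule Bernoulli_inequality) simp
  moreover have "1 + real k * (s^2 - 1) = 1 + real (2*k) * (s - 1) + real k * (s - 1)^2"
    by (simp add: power2_eq_square algebra_simps)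
  moreover have "real k * (s - 1)^2 > 0" using k s by simp
  ultimately show ?thesis by (simp add: power_mult)
qed

lemma gram_kernel_min:
  assumes a: "a > 0" and k: "k > 0"
  shows "gram_kernel k a (- real a) = (1 - 2 * real k) * real a^(2*k)"
    and "t \<noteq> - real a \<Longrightarrow> gram_kernel k a (- real a) < gram_kernel k a t"
proof -
  have pa: "real a ^ (2*k-1) * real a = real a^(2*k)"
    using power_minus_mult[of "2*k" "real a"] k by simp
  show q: "gram_kernel k a (- real a) = (1 - 2 * real k) * real a^(2*k)"
    unfolding gram_kernel_def using pa by (simp add: algebra_simps)
  assume t: "t \<noteq> - real a"
  define s where "s = - t / real a"
  have ts: "t = - (real a * s)" using a by (simp add: s_def)
  have s1: "s \<noteq> 1" using t a by (auto simp: s_def field_simps)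
  have "gram_kernel k a t = real a^(2*k) * (s^(2*k) - real (2*k) * s)"
    unfolding gram_kernel_def ts using pa[symmetric] by (simp add: power_mult_distrib algebra_simps)
  also have "\<dots> > real a^(2*k) * (1 - real (2*k))"
    using bernoulli_even_strict[OF k s1] a by (intro mult_strict_left_mono) (auto simp: algebra_simps)
  finally show "gram_kernel k a (- real a) < gram_kernel k a t" unfolding q by (simp add: algebra_simps)
qed

lemma star_dist:
  fixes D2 :: real
  assumes a: "a > 0" and k: "k > 0" and x: "x \<in> Sigma_set n" and y: "y \<in> Sigma_set n"
  defines "D2 \<equiv> 2 * real n^(2*k) + 4 * real k * real a^(2*k-1) * real n
                + (4 * real k - 2) * real a^(2*k)"
  shows "vdist (n^(2*k)+n) (star n a k x) (star n a k y) \<le> sqrt D2"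
    and "vdist (n^(2*k)+n) (star n a k x) (star n a k y) = sqrt D2 \<longleftrightarrow> ip n x y = - real a"
proof -
  let ?d = "vdist (n^(2*k)+n) (star n a k x) (star n a k y)"
  have sq: "?d^2 = D2 + 2 * (gram_kernel k a (- real a) - gram_kernel k a (ip n x y))"
    unfolding vdist_sq star_ip gram_kernel_min(1)[OF a k] unfolding D2_def gram_kernel_def
    by (simp add: ip_self[OF x] ip_self[OF y] algebra_simps)
  have "gram_kernel k a (- real a) \<le> gram_kernel k a (ip n x y)"
    using gram_kernel_min(2)[OF a k, of "ip n x y"] by (cases "ip n x y = - real a") auto
  then have le: "?d^2 \<le> D2" unfolding sq by simp
  then show "?d \<le> sqrt D2" by (rule real_le_rsqrt)
  have "0 \<le> D2" using le by (meson order_trans zero_le_power2)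
  have "?d = sqrt D2 \<longleftrightarrow> ?d^2 = D2"
  proof
    assume "?d = sqrt D2"
    then show "?d^2 = D2" using \<open>0 \<le> D2\<close> by simp
  next
    assume "?d^2 = D2"
    from real_sqrt_unique[OF this vdist_nonneg] show "?d = sqrt D2" by (rule sym)
  qed
  also have "\<dots> \<longleftrightarrow> gram_kernel k a (ip n x y) = gram_kernel k a (- real a)"
    using sq by auto
  also have "\<dots> \<longleftrightarrow> ip n x y = - real a"
    by (metis gram_kernel_min(2)[OF a k] less_irrefl)
  finally show "?d = sqrt D2 \<longleftrightarrow> ip n x y = - real a" .
qed

lemma star_diam:
  assumes "n mod 4 = 0" "a mod 4 = 0" "0 < a" "a < n" and k: "k > 0"
  shows "vdiam (n^(2*k)+n) (star n a k ` Sigma_set n)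
       = sqrt (2 * real n^(2*k) + 4 * real k * real a^(2*k-1) * real n
               + (4 * real k - 2) * real a^(2*k))"
proof -
  obtain x y where xy: "x \<in> Sigma_set n" "y \<in> Sigma_set n" "ip n x y = - real a"
    using Sigma_pair_ip[OF assms(1-4)] .
  show ?thesis
    by (rule vdiam_eq_attained[of "star n a k x" _ "star n a k y"])
      (use xy star_dist[OF assms(3) k] in auto)
qed


section \<open>Omega' spans a linear subspace of dimension at most n^{2k}\<close>

definition span_vec :: "nat \<Rightarrow> nat \<Rightarrow> nat \<Rightarrow> nat \<Rightarrow> nat \<Rightarrow> real" where
  "span_vec n a k j = (\<lambda>m. (if m = j then 1 else 0)
      + (if m = n^(2*k) + j \<and> j < n then sqrt (2 * real k * real a ^ (2*k-1)) else 0))"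

lemma span_vec_low: "i < n^(2*k) \<Longrightarrow> span_vec n a k j i = (if i = j then 1 else 0)"
  unfolding span_vec_def by auto

lemma star_span_vec:
  assumes x0: "x 0 = 1" and k: "k > 0" and j: "j < n^(2*k) + n"
  shows "star n a k x j = (\<Sum>i<n^(2*k). star n a k x i * span_vec n a k i j)"
proof (cases "j < n^(2*k)")
  case True
  then show ?thesis by (simp add: span_vec_low if_distrib cong: if_cong)
next
  case False
  define r where "r = j - n^(2*k)"
  have r: "r < n" "j = n^(2*k) + r" using False j unfolding r_def by auto
  moreover have "n \<le> n^(2*k)" using r k by (intro self_le_power) auto
  ultimately have "r < n^(2*k)" by linarith
  have "(\<Sum>i<n^(2*k). star n a k x i * span_vec n a k i j)
      = (\<Sum>i<n^(2*k). if i = r then star n a k x r * sqrt (2 * real k * real a ^ (2*k-1)) else 0)"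
    by (rule sum.cong) (use r in \<open>auto simp: span_vec_def\<close>)
  also have "\<dots> = star n a k x r * sqrt (2 * real k * real a ^ (2*k-1))"
    using \<open>r < n^(2*k)\<close> by simp
  also have "\<dots> = star n a k x j"
    unfolding r(2) star_high[OF r(1)] star_low[where x = x, OF x0 k r(1)] by simp
  finally show ?thesis by (rule sym)
qed

lemma star_linear_span:
  assumes k: "k > 0"
  shows "\<exists>B :: (nat \<Rightarrow> real) set. finite B \<and> card B \<le> n^(2*k) \<and>
        (\<forall>u\<in>star n a k ` Sigma_set n. \<exists>c :: (nat \<Rightarrow> real) \<Rightarrow> real.
            \<forall>j<n^(2*k)+n. u j = (\<Sum>b\<in>B. c b * b j))"
proof (intro exI[of _ "span_vec n a k ` {..<n^(2*k)}"] conjI ballI)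
  let ?M = "n^(2*k)"
  have inj: "inj_on (span_vec n a k) {..<?M}"
  proof (rule inj_onI)
    fix i i' assume i: "i \<in> {..<?M}" and eq: "span_vec n a k i = span_vec n a k i'"
    have "span_vec n a k i i = 1" using i by (simp add: span_vec_low)
    then have "span_vec n a k i' i = 1" using eq by simp
    then show "i = i'" using i by (simp add: span_vec_low split: if_splits)
  qed
  show "card (span_vec n a k ` {..<?M}) \<le> ?M" using card_image_le[of "{..<?M}"] by simp
  fix u assume "u \<in> star n a k ` Sigma_set n"
  then obtain x where x: "x \<in> Sigma_set n" and u: "u = star n a k x" by auto
  have x0: "x 0 = 1" using x by (simp add: Sigma_set_def)
  show "\<exists>c. \<forall>j<?M+n. u j = (\<Sum>b\<in>span_vec n a k ` {..<?M}. c b * b j)"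
  proof (intro exI allI impI)
    fix j assume j: "j < ?M + n"
    have "u j = (\<Sum>i<?M. u i * span_vec n a k i j)"
      unfolding u by (rule star_span_vec[where x = x, OF x0 k j])
    also have "\<dots> = (\<Sum>b\<in>span_vec n a k ` {..<?M}. u (inv_into {..<?M} (span_vec n a k) b) * b j)"
      by (simp add: sum.reindex[OF inj] inv_into_f_f[OF inj])
    finally show "u j = (\<Sum>b\<in>span_vec n a k ` {..<?M}. u (inv_into {..<?M} (span_vec n a k) b) * b j)" .
  qed
qed simp


section \<open>The Borsuk bound\<close>

text \<open>A part of Omega' of smaller diameter contains no pair with (x,y) = -a.  Since
  (x,y) = n - 4 d(x,y) and 0 < d(x,y) < 2p for x \<noteq> y, this means p never divides d on the
  part, so Frankl-Wilson bounds its size.\<close>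
lemma small_part_bound:
  assumes n4: "n mod 4 = 0" and a4: "a mod 4 = 0" and a0: "0 < a" and an: "a < n"
    and pr: "prime ((a + n) div 4)" and k: "0 < k"
    and Y: "Y \<subseteq> Sigma_set n"
    and small: "vdiam (n^(2*k)+n) (star n a k ` Y) < vdiam (n^(2*k)+n) (star n a k ` Sigma_set n)"
  shows "card Y \<le> (\<Sum>i<(a + n) div 4. n choose i)"
proof (rule frankl_wilson_modular[OF pr], intro ballI impI notI)
  let ?p = "(a + n) div 4"
  fix x y assume x: "x \<in> Y" and y: "y \<in> Y" and xy: "x \<noteq> y" and dv: "?p dvd disagree n x y"
  have xS: "x \<in> Sigma_set n" and yS: "y \<in> Sigma_set n" using x y Y by auto
  have p4: "4 * ?p = a + n" using n4 a4 by auto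
  obtain q where q: "disagree n x y = ?p * q" using dv by (rule dvdE)
  have "q \<noteq> 0" using disagree_eq_0[OF xS yS] xy q by auto
  moreover have "?p * q < ?p * 2" using disagree_bound[OF xS yS] p4 q by linarith
  then have "q < 2" by (metis mult_less_cancel1)
  ultimately have "disagree n x y = ?p" using q by simp
  moreover have "4 * real ?p = real a + real n" using arg_cong[OF p4, of real] by simp
  ultimately have "ip n x y = - real a" unfolding ip_disagree[OF xS yS] by linarith
  then have "vdist (n^(2*k)+n) (star n a k x) (star n a k y)
      = vdiam (n^(2*k)+n) (star n a k ` Sigma_set n)"
    unfolding star_diam[OF n4 a4 a0 an k] using star_dist(2)[OF a0 k xS yS] by blast
  moreover have "vdist (n^(2*k)+n) (star n a k x) (star n a k y) \<le> vdiam (n^(2*k)+n) (star n a k ` Y)"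
    using x y finite_subset[OF Y finite_Sigma] by (intro vdist_le_vdiam) auto
  ultimately show False using small by linarith
qed


theorem mainTheorem6:
  fixes n a k :: nat
  assumes "n mod 4 = 0" and "a mod 4 = 0" and "0 < a" and "a < n"
    and "prime ((a + n) div 4)" and "0 < k"
  defines "N \<equiv> n^(2*k) + n"
    and "\<Omega>' \<equiv> star n a k ` Sigma_set n"
  shows
    "(\<forall>x\<in>Sigma_set n. \<forall>y\<in>Sigma_set n.
        ip N (star n a k x) (star n a k y)
          = (ip n x y)^(2*k) + 2 * real k * real a^(2*k-1) * ip n x y)
   \<and> (\<forall>u\<in>\<Omega>'. ip N u u = real n^(2*k) + 2 * real k * real a^(2*k-1) * real n)
   \<and> (vdiam N \<Omega>')^2 = 2 * real n^(2*k) + 4 * real k * real a^(2*k-1) * real n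
                        + (4 * real k - 2) * real a^(2*k)
   \<and> (\<forall>x\<in>Sigma_set n. \<forall>y\<in>Sigma_set n.
        vdist N (star n a k x) (star n a k y) = vdiam N \<Omega>' \<longleftrightarrow> ip n x y = - real a)
   \<and> (\<exists>B :: (nat \<Rightarrow> real) set. finite B \<and> card B \<le> n^(2*k) \<and>
        (\<forall>u\<in>\<Omega>'. \<exists>c :: (nat \<Rightarrow> real) \<Rightarrow> real. \<forall>j<N. u j = (\<Sum>b\<in>B. c b * b j)))
   \<and> real (borsuk_num N \<Omega>')
       \<ge> real ((n - 1) choose (n div 2 - 1)) / (\<Sum>i<(a + n) div 4. real (n choose i))"
proof -
  let ?D2 = "2 * real n^(2*k) + 4 * real k * real a^(2*k-1) * real n + (4 * real k - 2) * real a^(2*k)"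
  let ?Bd = "\<Sum>i<(a + n) div 4. n choose i"
  have diam: "vdiam N \<Omega>' = sqrt ?D2" unfolding N_def \<Omega>'_def by (rule star_diam[OF assms(1-4,6)])
  have D2: "?D2 > 0" using assms(4,6) by (simp add: add_pos_nonneg)
  have "(n - 1) choose (n div 2 - 1) \<le> card (Sigma_set n)"
    using assms(1,4) by (intro card_Sigma_ge) auto
  also have "\<dots> \<le> borsuk_num N \<Omega>' * ?Bd" unfolding N_def \<Omega>'_def
    using diam D2 small_part_bound[OF assms(1-6)] finite_Sigma
    by (intro card_le_borsuk_num_mult) (auto simp: N_def \<Omega>'_def)
  finally have "real ((n - 1) choose (n div 2 - 1)) \<le> real (borsuk_num N \<Omega>') * real ?Bd"
    by (metis of_nat_le_iff of_nat_mult)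
  moreover have "real ?Bd > 0"
    using prime_gt_0_nat[OF assms(5)] by (simp add: sum_pos2[where i=0])
  ultimately have P6: "real ((n - 1) choose (n div 2 - 1)) / real ?Bd \<le> real (borsuk_num N \<Omega>')"
    by (simp add: pos_divide_le_eq)
  have P4: "\<forall>x\<in>Sigma_set n. \<forall>y\<in>Sigma_set n.
      vdist N (star n a k x) (star n a k y) = vdiam N \<Omega>' \<longleftrightarrow> ip n x y = - real a"
    unfolding diam unfolding N_def by (intro ballI) (rule star_dist(2)[OF assms(3,6)])
  have P3: "(vdiam N \<Omega>')^2 = ?D2" using diam D2 by simp
  have P2: "\<forall>u\<in>\<Omega>'. ip N u u = real n^(2*k) + 2 * real k * real a^(2*k-1) * real n"
    unfolding \<Omega>'_def N_def by (auto simp: star_sq_norm)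
  have P1: "\<forall>x\<in>Sigma_set n. \<forall>y\<in>Sigma_set n. ip N (star n a k x) (star n a k y)
      = (ip n x y)^(2*k) + 2 * real k * real a^(2*k-1) * ip n x y"
    unfolding N_def star_ip gram_kernel_def by simp
  note P5 = star_linear_span[OF assms(6), of n a, folded N_def \<Omega>'_def]
  show ?thesis unfolding of_nat_sum[symmetric] by (intro conjI P1 P2 P3 P4 P5 P6)
qed

end
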